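(* If $G$ is a connected graph of order at least two and $t\ge 2$, then $O_{\rm SR}(G\diamond K_t)=\mathcal{B}$.
   Context: All graphs are finite, simple and undirected; $\overline{X}$ denotes the complement of $X$. The modular product $G\diamond H$ has vertex set $V(G)\times V(H)$, and $(g,h)$, $(g',h')$ are adjacent iff one of the following holds: ($g=g'$ and $hh'\in E(H)$), or ($h=h'$ and $gg'\in E(G)$), or ($gg'\in E(G)$ and $hh'\in E(H)$), or ($gg'\in E(\overline{G})$ and $hh'\in E(\overline{H})$). A set $S\subseteq V(X)$ is a strong resolving set of a connected graph $X$ if for all distinct $x,y\in V(X)$ there exists $z\in S$ such that $x$ lies on a $y$–$z$ geodesic or $y$ lies on an $x$–$z$ geodesic. The Maker–Breaker strong resolving game on $X$: Maker and Breaker alternately select a not-yet-chosen vertex of $X$; Maker wins if the vertices he selects contain a strong resolving set of $X$, Breaker wins otherwise. In the M-game Maker moves first, in the B-game Breaker moves first. $O_{\rm SR}(X)=\mathcal{M}$ if Maker has a winning strategy in both games, $\mathcal{B}$ if Breaker has a winning strategy in both, and $\mathcal{N}$ if the first player has a winning strategy in each. *)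

theory Defs
  imports Main
begin

type_synonym 'a graph = "'a set \<times> ('a \<Rightarrow> 'a \<Rightarrow> bool)"

definition verts :: "'a graph \<Rightarrow> 'a set" where "verts G = fst G"
definition adj :: "'a graph \<Rightarrow> 'a \<Rightarrow> 'a \<Rightarrow> bool" where "adj G = snd G"

definition simple_graph :: "'a graph \<Rightarrow> bool" where
  "simple_graph G \<longleftrightarrow> finite (verts G)
     \<and> (\<forall>u v. adj G u v \<longrightarrow> u \<in> verts G \<and> v \<in> verts G)
     \<and> (\<forall>u v. adj G u v \<longrightarrow> adj G v u)
     \<and> (\<forall>u. \<not> adj G u u)"

definition co_adj :: "'a graph \<Rightarrow> 'a \<Rightarrow> 'a \<Rightarrow> bool" where
  "co_adj G u v \<longleftrightarrow> u \<in> verts G \<and> v \<in> verts G \<and> u \<noteq> v \<and> \<not> adj G u v"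

definition complete_graph :: "nat \<Rightarrow> nat graph" where
  "complete_graph t = ({0..<t}, \<lambda>i j. i < t \<and> j < t \<and> i \<noteq> j)"

definition modular_product :: "'a graph \<Rightarrow> 'b graph \<Rightarrow> ('a \<times> 'b) graph" where
  "modular_product G H = (verts G \<times> verts H,
     \<lambda>(g,h) (g',h'). (g,h) \<in> verts G \<times> verts H \<and> (g',h') \<in> verts G \<times> verts H \<and>
       ((g = g' \<and> adj H h h') \<or> (h = h' \<and> adj G g g') \<or>
        (adj G g g' \<and> adj H h h') \<or> (co_adj G g g' \<and> co_adj H h h')))"

definition walk :: "'a graph \<Rightarrow> 'a list \<Rightarrow> 'a \<Rightarrow> 'a \<Rightarrow> bool" where
  "walk G p x y \<longleftrightarrow> p \<noteq> [] \<and> hd p = x \<and> last p = y \<and> set p \<subseteq> verts G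
     \<and> (\<forall>i. Suc i < length p \<longrightarrow> adj G (p ! i) (p ! Suc i))"

definition connected_graph :: "'a graph \<Rightarrow> bool" where
  "connected_graph G \<longleftrightarrow> (\<forall>x\<in>verts G. \<forall>y\<in>verts G. \<exists>p. walk G p x y)"

definition gdist :: "'a graph \<Rightarrow> 'a \<Rightarrow> 'a \<Rightarrow> nat" where
  "gdist G x y = (LEAST n. \<exists>p. walk G p x y \<and> length p = Suc n)"

definition geodesic :: "'a graph \<Rightarrow> 'a list \<Rightarrow> 'a \<Rightarrow> 'a \<Rightarrow> bool" where
  "geodesic G p x y \<longleftrightarrow> walk G p x y \<and> length p = Suc (gdist G x y)"

definition on_geodesic :: "'a graph \<Rightarrow> 'a \<Rightarrow> 'a \<Rightarrow> 'a \<Rightarrow> bool" where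
  "on_geodesic G w x y \<longleftrightarrow> (\<exists>p. geodesic G p x y \<and> w \<in> set p)"

definition strong_resolving_set :: "'a graph \<Rightarrow> 'a set \<Rightarrow> bool" where
  "strong_resolving_set G S \<longleftrightarrow> S \<subseteq> verts G \<and>
     (\<forall>x\<in>verts G. \<forall>y\<in>verts G. x \<noteq> y \<longrightarrow>
        (\<exists>z\<in>S. on_geodesic G x y z \<or> on_geodesic G y x z))"

text \<open>States: Maker's set M, Breaker's set B,
  and whose turn it is (True = Maker to move).\<close>

definition maker_goal :: "'a graph \<Rightarrow> 'a set \<Rightarrow> bool" where
  "maker_goal G M \<longleftrightarrow> (\<exists>S\<subseteq>M. strong_resolving_set G S)"

inductive maker_can_win :: "'a graph \<Rightarrow> 'a set \<Rightarrow> 'a set \<Rightarrow> bool \<Rightarrow> bool"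
  for G where
  end_win: "verts G - M - B = {} \<Longrightarrow> maker_goal G M \<Longrightarrow> maker_can_win G M B mt"
| maker_move: "v \<in> verts G - M - B \<Longrightarrow> maker_can_win G (insert v M) B False
     \<Longrightarrow> maker_can_win G M B True"
| breaker_move: "verts G - M - B \<noteq> {} \<Longrightarrow>
     (\<forall>v\<in>verts G - M - B. maker_can_win G M (insert v B) True)
     \<Longrightarrow> maker_can_win G M B False"

inductive breaker_can_win :: "'a graph \<Rightarrow> 'a set \<Rightarrow> 'a set \<Rightarrow> bool \<Rightarrow> bool"
  for G where
  end_win: "verts G - M - B = {} \<Longrightarrow> \<not> maker_goal G M \<Longrightarrow> breaker_can_win G M B mt"
| breaker_move: "v \<in> verts G - M - B \<Longrightarrow> breaker_can_win G M (insert v B) True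
     \<Longrightarrow> breaker_can_win G M B False"
| maker_move: "verts G - M - B \<noteq> {} \<Longrightarrow>
     (\<forall>v\<in>verts G - M - B. breaker_can_win G (insert v M) B False)
     \<Longrightarrow> breaker_can_win G M B True"

datatype outcome = Out_M | Out_B | Out_N | Out_P

text \<open>M-game: Maker first (turn True); B-game: Breaker first (turn False).\<close>
definition O_SR :: "'a graph \<Rightarrow> outcome" where
  "O_SR G = (if maker_can_win G {} {} True \<and> maker_can_win G {} {} False then Out_M
     else if breaker_can_win G {} {} True \<and> breaker_can_win G {} {} False then Out_B
     else if maker_can_win G {} {} True \<and> breaker_can_win G {} {} False then Out_N
     else Out_P)"

end

theory Submission
  imports Defs
begin

(* Since K_t has no non-edges, G \<diamond> K_t is G with every vertex blown up into a clique of t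
   true twins: two vertices in one clique are at distance 1, vertices over different g, g'
   are at distance d_G(g, g'). Fix a diametral pair u, v of G and two distinct vertices x, y
   over {u, v}. No third vertex z strongly resolves x and y: if they are twins, z sees them
   at the same distance; otherwise d(x, y) is the diameter, so neither lies strictly between
   the other and z. Hence every strong resolving set misses at most one of the four vertices
   {u, v} \<times> {0, 1}, and Breaker, who can claim two of these four in either game, wins. *)

lemma walk_Cons:
  "walk G (a # p) a' y \<longleftrightarrow> a = a' \<and> a \<in> verts G \<and>
     (if p = [] then y = a else adj G a (hd p) \<and> walk G p (hd p) y)"
proof (cases p)
  case Nil
  then show ?thesis by (auto simp: walk_def)
next
  case (Cons b q)
  have "(\<forall>i. Suc i < length (a#b#q) \<longrightarrow> adj G ((a#b#q) ! i) ((a#b#q) ! Suc i)) \<longleftrightarrow>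
        adj G a b \<and> (\<forall>i. Suc i < length (b#q) \<longrightarrow> adj G ((b#q) ! i) ((b#q) ! Suc i))"
    by (auto simp: less_Suc_eq_0_disj nth_Cons split: nat.splits)
  then show ?thesis using Cons by (auto simp: walk_def)
qed

lemma walk_rev:
  assumes sym: "\<And>a b. adj G a b \<Longrightarrow> adj G b a" and "walk G p x y"
  shows "walk G (rev p) y x"
proof -
  have "adj G (rev p ! i) (rev p ! Suc i)" if "Suc i < length p" for i
  proof -
    have "adj G (p ! (length p - Suc (Suc i))) (p ! Suc (length p - Suc (Suc i)))"
      using \<open>walk G p x y\<close> that by (simp add: walk_def)
    moreover have "Suc (length p - Suc (Suc i)) = length p - Suc i" using that by simp
    ultimately show ?thesis using sym that by (simp add: rev_nth)
  qed
  then show ?thesis using \<open>walk G p x y\<close> by (auto simp: walk_def hd_rev last_rev)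
qed

lemma gdist_less_length: "walk G p x y \<Longrightarrow> gdist G x y < length p"
  unfolding gdist_def
  by (rule order.strict_trans1[OF Least_le[of _ "length p - 1"]]) (auto simp: walk_def)

lemma geodesic_exists: "walk G p x y \<Longrightarrow> \<exists>q. geodesic G q x y"
  unfolding geodesic_def gdist_def
  by (rule LeastI_ex[of "\<lambda>n. \<exists>q. walk G q x y \<and> length q = Suc n"])
    (auto simp: walk_def intro!: exI[of _ "length p - 1"] exI[of _ p])

lemma gdist_self: "x \<in> verts G \<Longrightarrow> gdist G x x = 0"
  using gdist_less_length[of G "[x]" x x] by (simp add: walk_def)

lemma gdist_pos:
  assumes "walk G p x y" and "x \<noteq> y"
  shows "0 < gdist G x y"
proof -
  obtain q where q: "walk G q x y" "length q = Suc (gdist G x y)"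
    using geodesic_exists[OF assms(1)] by (auto simp: geodesic_def)
  show ?thesis
  proof (rule ccontr)
    assume "\<not> ?thesis"
    then have "q = [x]" using q by (cases q) (auto simp: walk_def)
    then show False using q(1) assms(2) by (simp add: walk_def)
  qed
qed

lemma gdist_commute:
  assumes "\<And>a b. adj G a b \<Longrightarrow> adj G b a"
  shows "gdist G x y = gdist G y x"
proof -
  have "(\<exists>p. walk G p x y \<and> length p = n) \<longleftrightarrow> (\<exists>p. walk G p y x \<and> length p = n)" for n
    using walk_rev[OF assms] by (metis length_rev rev_rev_ident)
  then show ?thesis by (simp add: gdist_def)
qed

lemma on_geodesic_gdist:
  assumes "on_geodesic G w x y"
  shows "gdist G x w + gdist G w y \<le> gdist G x y"
proof -
  obtain p i where p: "geodesic G p x y" "i < length p" "p ! i = w"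
    using assms by (auto simp: on_geodesic_def in_set_conv_nth)
  then have "last (take (Suc i) p) = w" by (simp add: take_Suc_conv_app_nth)
  then have "walk G (take (Suc i) p) x w" "walk G (drop i p) w y"
    using p by (auto simp: geodesic_def walk_def hd_conv_nth hd_drop_conv_nth
        dest: in_set_takeD in_set_dropD)
  then have "gdist G x w \<le> i" "gdist G w y < length p - i"
    using gdist_less_length p(2) by fastforce+
  then show ?thesis using p(1) by (simp add: geodesic_def)
qed

lemma strong_resolving_set_contains:
  assumes "strong_resolving_set G S" and "x \<in> verts G" "y \<in> verts G" "x \<noteq> y"
    and "\<And>z. z \<in> verts G - {x, y} \<Longrightarrow>
      gdist G y z < gdist G y x + gdist G x z \<and> gdist G x z < gdist G x y + gdist G y z"
  shows "x \<in> S \<or> y \<in> S"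
proof -
  have "\<exists>z\<in>S. on_geodesic G x y z \<or> on_geodesic G y x z"
    using assms(1-4) by (auto simp: strong_resolving_set_def)
  then obtain z where "z \<in> S" and z: "on_geodesic G x y z \<or> on_geodesic G y x z" ..
  then have "z \<in> verts G" using assms(1) by (auto simp: strong_resolving_set_def)
  show ?thesis
  proof (rule ccontr)
    assume "\<not> ?thesis"
    then have "z \<in> verts G - {x, y}" using \<open>z \<in> S\<close> \<open>z \<in> verts G\<close> by auto
    then show False using z assms(5) on_geodesic_gdist by fastforce
  qed
qed

lemma diametral_pair_exists:
  assumes "finite (verts G)" and "2 \<le> card (verts G)"
  obtains u v where "u \<in> verts G" "v \<in> verts G" "u \<noteq> v"
    and "\<And>a b. a \<in> verts G \<Longrightarrow> b \<in> verts G \<Longrightarrow> a \<noteq> b \<Longrightarrow> gdist G a b \<le> gdist G u v"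
proof -
  define P where "P = {(a, b). a \<in> verts G \<and> b \<in> verts G \<and> a \<noteq> b}"
  have "finite P" using assms(1) by (auto simp: P_def intro: finite_subset[of _ "verts G \<times> verts G"])
  moreover have "P \<noteq> {}"
    using assms card_le_Suc0_iff_eq[OF assms(1)] by (force simp: P_def)
  ultimately obtain u v where uv: "(u, v) \<in> P" "gdist G u v = Max (case_prod (gdist G) ` P)"
    by (metis (no_types, lifting) Max_in finite_imageI image_iff image_is_empty case_prod_conv
        surj_pair)
  show ?thesis
  proof (rule that)
    fix a b assume "a \<in> verts G" "b \<in> verts G" "a \<noteq> b"
    then have "(a, b) \<in> P" by (simp add: P_def)
    then show "gdist G a b \<le> gdist G u v" using uv(2) \<open>finite P\<close> by (force intro: Max_ge)
  qed (use uv(1) in \<open>auto simp: P_def\<close>)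
qed

lemma maker_can_win_imp_not_breaker_can_win:
  "maker_can_win G M B mt \<Longrightarrow> \<not> breaker_can_win G M B mt"
  by (induction rule: maker_can_win.induct) (auto elim: breaker_can_win.cases)

(* Breaker's strategy is to claim a free vertex of Q whenever there is one; the right-hand side
   of share is the number of vertices of Q that he then owns when the board is full. *)
lemma breaker_can_win_claiming:
  assumes fin: "finite (verts G)" and Q: "Q \<subseteq> verts G"
    and goal: "\<And>M'. maker_goal G M' \<Longrightarrow> card (Q - M') \<le> 1"
    and share: "2 \<le> card (Q \<inter> B - M) + (card (Q - M - B) + (if mt then 0 else 1)) div 2"
  shows "breaker_can_win G M B mt"
  using share
proof (induction "card (verts G - M - B)" arbitrary: M B mt rule: less_induct)
  case less
  have finQ: "finite Q" using fin Q by (rule finite_subset[rotated])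
  have shrink_M: "card (verts G - insert v M - B) < card (verts G - M - B)"
    and shrink_B: "card (verts G - M - insert v B) < card (verts G - M - B)"
    if "v \<in> verts G - M - B" for v
    using that fin by (intro psubset_card_mono; auto)+
  show ?case
  proof (cases "verts G - M - B = {}")
    case True
    then have "Q - M - B = {}" using Q by blast
    then have "card (Q - M - B) = 0" by (simp only: card.empty)
    then have "2 \<le> card (Q \<inter> B - M)" using less.prems by (cases mt) simp_all
    also have "\<dots> \<le> card (Q - M)" using finQ by (intro card_mono) auto
    finally have "\<not> maker_goal G M" using goal by fastforce
    with True show ?thesis by (rule breaker_can_win.end_win)
  next
    case free: False
    show ?thesis
    proof (cases mt)
      case True
      have "breaker_can_win G (insert v M) B False" if v: "v \<in> verts G - M - B" for v
      proof (rule less.hyps[OF shrink_M[OF v]])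
        have "card (Q - M - B) \<le> card (insert v (Q - insert v M - B))"
          using finQ by (intro card_mono) auto
        also have "\<dots> \<le> Suc (card (Q - insert v M - B))"
          using finQ by (simp add: card_insert_if)
        moreover have "Q \<inter> B - insert v M = Q \<inter> B - M" using v by blast
        ultimately show "2 \<le> card (Q \<inter> B - insert v M)
            + (card (Q - insert v M - B) + (if False then 0 else 1)) div 2"
          using less.prems True by auto
      qed
      with free True show ?thesis by (simp add: breaker_can_win.maker_move)
    next
      case False
      obtain v where vfree: "v \<in> verts G - M - B" and vQ: "Q - M - B \<noteq> {} \<Longrightarrow> v \<in> Q"
        using free Q by (cases "Q - M - B = {}") blast+
      have "2 \<le> card (Q \<inter> insert v B - M) + card (Q - M - insert v B) div 2"
      proof (cases "v \<in> Q")
        case True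
        have "Q - M - B = insert v (Q - M - insert v B)" using True vfree by blast
        then have "card (Q - M - B) = Suc (card (Q - M - insert v B))"
          using finQ by (metis card_insert_disjoint finite_Diff insertCI DiffD2)
        moreover have "Q \<inter> insert v B - M = insert v (Q \<inter> B - M)" using True vfree by blast
        then have "card (Q \<inter> insert v B - M) = Suc (card (Q \<inter> B - M))"
          using vfree finQ by simp
        ultimately show ?thesis using less.prems False by simp
      next
        case False
        then have "Q - M - B = {}" "Q - M - insert v B = {}" "Q \<inter> insert v B - M = Q \<inter> B - M"
          using vQ by blast+
        with less.prems \<open>\<not> mt\<close> show ?thesis by simp
      qed
      then have "breaker_can_win G M (insert v B) True" using less.hyps[OF shrink_B[OF vfree]] by simp
      with vfree False show ?thesis by (simp add: breaker_can_win.breaker_move)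
    qed
  qed
qed

lemma O_SR_eq_Out_B_if_Maker_needs_all_but_one:
  assumes "finite (verts G)" and "Q \<subseteq> verts G" and "4 \<le> card Q"
    and "\<And>M. maker_goal G M \<Longrightarrow> card (Q - M) \<le> 1"
  shows "O_SR G = Out_B"
proof -
  have breaker: "breaker_can_win G {} {} mt" for mt
    using breaker_can_win_claiming[OF assms(1,2,4)] assms(3) by simp
  then have "\<not> maker_can_win G {} {} True"
    using maker_can_win_imp_not_breaker_can_win by blast
  with breaker show ?thesis by (simp add: O_SR_def)
qed

abbreviation blowup :: "'a graph \<Rightarrow> nat \<Rightarrow> ('a \<times> nat) graph" where
  "blowup G t \<equiv> modular_product G (complete_graph t)"

lemma verts_blowup: "verts (blowup G t) = verts G \<times> {0..<t}"
  by (simp add: modular_product_def verts_def complete_graph_def)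

lemma adj_blowup:
  "adj (blowup G t) (g, h) (g', h') \<longleftrightarrow> g \<in> verts G \<and> g' \<in> verts G \<and> h < t \<and> h' < t \<and>
     (g = g' \<and> h \<noteq> h' \<or> adj G g g')"
  by (auto simp: modular_product_def adj_def verts_def complete_graph_def co_adj_def)

lemma walk_project:
  assumes edge: "\<And>a b. adj H a b \<Longrightarrow> f a = f b \<or> adj G (f a) (f b)"
    and vert: "\<And>a. a \<in> verts H \<Longrightarrow> f a \<in> verts G"
    and "walk H q x y"
  shows "\<exists>p. walk G p (f x) (f y) \<and> length p \<le> length q"
  using \<open>walk H q x y\<close>
proof (induction q arbitrary: x)
  case Nil
  then show ?case by (simp add: walk_def)
next
  case (Cons a q)
  show ?case
  proof (cases "q = []")
    case True
    then have "walk G [f x] (f x) (f y)" using Cons.prems vert by (auto simp: walk_Cons walk_def)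
    then show ?thesis by force
  next
    case False
    then have a: "x \<in> verts H" "adj H x (hd q)" "walk H q (hd q) y"
      using Cons.prems by (auto simp: walk_Cons)
    obtain p where p: "walk G p (f (hd q)) (f y)" "length p \<le> length q"
      using Cons.IH[OF a(3)] by blast
    show ?thesis
    proof (cases "f x = f (hd q)")
      case True
      then show ?thesis using p by (intro exI[of _ p]) auto
    next
      case False
      moreover have "p \<noteq> []" "hd p = f (hd q)" using p(1) by (auto simp: walk_def)
      ultimately have "walk G (f x # p) (f x) (f y)"
        using p(1) edge[OF a(2)] vert[OF a(1)] by (simp add: walk_Cons)
      then show ?thesis using p by (intro exI[of _ "f x # p"]) auto
    qed
  qed
qed

lemma walk_lift_blowup:
  assumes w: "walk G p a b" and "2 \<le> length p" and "h0 < t" "h1 < t"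
  shows "walk (blowup G t) (map (\<lambda>i. (p ! i, if i = 0 then h0 else h1)) [0..<length p])
    (a, h0) (b, h1)"
proof -
  have "p \<noteq> []" "p ! 0 = a" "p ! (length p - 1) = b"
    and "\<And>i. i < length p \<Longrightarrow> p ! i \<in> verts G"
    and "\<And>i. Suc i < length p \<Longrightarrow> adj G (p ! i) (p ! Suc i)"
    using w by (auto simp: walk_def hd_conv_nth last_conv_nth)
  with assms(2-4) show ?thesis
    unfolding walk_def by (auto simp: hd_map last_map verts_blowup adj_blowup hd_upt last_upt)
qed

lemma gdist_blowup:
  assumes con: "connected_graph G"
    and x: "(g, h) \<in> verts (blowup G t)" and y: "(g', h') \<in> verts (blowup G t)"
  shows "gdist (blowup G t) (g, h) (g', h') =
    (if g = g' then (if h = h' then 0 else 1) else gdist G g g')"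
proof (cases "g = g'")
  case True
  show ?thesis
  proof (cases "h = h'")
    case True
    with \<open>g = g'\<close> x show ?thesis by (simp add: gdist_self)
  next
    case False
    with \<open>g = g'\<close> x y have "walk (blowup G t) [(g, h), (g', h')] (g, h) (g', h')"
      by (auto simp: walk_Cons verts_blowup adj_blowup)
    with False \<open>g = g'\<close> show ?thesis
      using gdist_pos gdist_less_length by fastforce
  qed
next
  case False
  have gh: "g \<in> verts G" "g' \<in> verts G" "h < t" "h' < t" using x y by (auto simp: verts_blowup)
  then obtain p where p: "walk G p g g'" "length p = Suc (gdist G g g')"
    using con geodesic_exists by (fastforce simp: connected_graph_def geodesic_def)
  then have "2 \<le> length p" using gdist_pos[OF p(1) False] by simp
  from walk_lift_blowup[OF p(1) this gh(3,4)]
  obtain L where L: "walk (blowup G t) L (g, h) (g', h')" "length L = length p" by force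
  then have "gdist (blowup G t) (g, h) (g', h') \<le> gdist G g g'"
    using gdist_less_length p(2) by fastforce
  moreover obtain q where q: "walk (blowup G t) q (g, h) (g', h')"
    "length q = Suc (gdist (blowup G t) (g, h) (g', h'))"
    using geodesic_exists[OF L(1)] by (auto simp: geodesic_def)
  have "fst a = fst b \<or> adj G (fst a) (fst b)" if "adj (blowup G t) a b" for a b
    using that by (cases a, cases b) (auto simp: adj_blowup)
  from walk_project[where f = fst, OF this _ q(1)]
  have "\<exists>p'. walk G p' g g' \<and> length p' \<le> length q" by (auto simp: verts_blowup)
  then have "gdist G g g' \<le> gdist (blowup G t) (g, h) (g', h')"
    using gdist_less_length q(2) by fastforce
  ultimately show ?thesis using False by simp
qed

lemma blowup_strict_triangle:
  assumes con: "connected_graph G"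
    and x: "x \<in> verts (blowup G t)" and y: "y \<in> verts (blowup G t)" and "x \<noteq> y"
    and z: "z \<in> verts (blowup G t) - {x, y}"
    and diam: "fst x = fst y \<or>
      (\<forall>a\<in>verts G. \<forall>b\<in>verts G. a \<noteq> b \<longrightarrow> gdist G a b \<le> gdist G (fst y) (fst x))"
  shows "gdist (blowup G t) y z < gdist (blowup G t) y x + gdist (blowup G t) x z"
proof -
  have pos: "0 < gdist G a b" if "a \<in> verts G" "b \<in> verts G" "a \<noteq> b" for a b
    using con that gdist_pos by (metis connected_graph_def)
  obtain a i b j c k where xyz: "x = (a, i)" "y = (b, j)" "z = (c, k)"
    by (cases x, cases y, cases z) auto
  have abc: "a \<in> verts G" "b \<in> verts G" "c \<in> verts G"
    using x y z unfolding xyz by (auto simp: verts_blowup)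
  show ?thesis
  proof (cases "a = b")
    case True
    then show ?thesis using x y z \<open>x \<noteq> y\<close> unfolding xyz by (auto simp: gdist_blowup[OF con])
  next
    case False
    have "gdist (blowup G t) y z \<le> gdist G b a"
      using x y z abc diam False pos[OF abc(2,1)] unfolding xyz by (auto simp: gdist_blowup[OF con])
    moreover have "0 < gdist (blowup G t) x z"
      using x z pos[OF abc(1,3)] unfolding xyz by (auto simp: gdist_blowup[OF con])
    ultimately show ?thesis using x y False unfolding xyz by (simp add: gdist_blowup[OF con])
  qed
qed

lemma strong_resolving_set_blowup_diametral:
  assumes sym: "\<And>a b. adj G a b \<Longrightarrow> adj G b a" and con: "connected_graph G"
    and diam: "\<And>a b. a \<in> verts G \<Longrightarrow> b \<in> verts G \<Longrightarrow> a \<noteq> b \<Longrightarrow> gdist G a b \<le> gdist G u v"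
    and S: "strong_resolving_set (blowup G t) S"
    and x: "x \<in> {u, v} \<times> {0..<t}" and y: "y \<in> {u, v} \<times> {0..<t}" and "x \<noteq> y"
    and uv: "u \<in> verts G" "v \<in> verts G"
  shows "x \<in> S \<or> y \<in> S"
proof (rule strong_resolving_set_contains[OF S])
  show xv: "x \<in> verts (blowup G t)" and yv: "y \<in> verts (blowup G t)"
    using x y uv by (auto simp: verts_blowup)
  have diametral: "fst p = fst q \<or>
      (\<forall>a\<in>verts G. \<forall>b\<in>verts G. a \<noteq> b \<longrightarrow> gdist G a b \<le> gdist G (fst q) (fst p))"
    if "p \<in> {u, v} \<times> {0..<t}" "q \<in> {u, v} \<times> {0..<t}" for p q
    using that diam gdist_commute[OF sym, of u v] by auto
  fix z assume "z \<in> verts (blowup G t) - {x, y}"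
  then show "gdist (blowup G t) y z < gdist (blowup G t) y x + gdist (blowup G t) x z \<and>
      gdist (blowup G t) x z < gdist (blowup G t) x y + gdist (blowup G t) y z"
    using blowup_strict_triangle[OF con xv yv \<open>x \<noteq> y\<close> _ diametral[OF x y]]
      blowup_strict_triangle[OF con yv xv \<open>x \<noteq> y\<close>[symmetric] _ diametral[OF y x]]
    by (simp add: insert_commute)
qed fact

theorem mainTheorem16:
  fixes G :: "'a graph" and t :: nat
  assumes "simple_graph G" and "connected_graph G" and "card (verts G) \<ge> 2" and "t \<ge> 2"
  shows "O_SR (modular_product G (complete_graph t)) = Out_B"
proof -
  have fin: "finite (verts G)" and sym: "\<And>a b. adj G a b \<Longrightarrow> adj G b a"
    using assms(1) by (auto simp: simple_graph_def)
  obtain u v where uv: "u \<in> verts G" "v \<in> verts G" "u \<noteq> v"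
    and diam: "\<And>a b. a \<in> verts G \<Longrightarrow> b \<in> verts G \<Longrightarrow> a \<noteq> b \<Longrightarrow> gdist G a b \<le> gdist G u v"
    using diametral_pair_exists[OF fin assms(3)] by blast
  define Q where "Q = {u, v} \<times> {0, 1 :: nat}"
  have Q_sub: "Q \<subseteq> {u, v} \<times> {0..<t}" using assms(4) by (auto simp: Q_def)
  show ?thesis
  proof (rule O_SR_eq_Out_B_if_Maker_needs_all_but_one)
    show "finite (verts (blowup G t))" using fin by (simp add: verts_blowup)
    show "Q \<subseteq> verts (blowup G t)" using Q_sub uv by (auto simp: verts_blowup)
    show "4 \<le> card Q" using uv(3) by (simp add: Q_def card_cartesian_product)
    fix M assume "maker_goal (blowup G t) M"
    then obtain S where "S \<subseteq> M" "strong_resolving_set (blowup G t) S"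
      by (auto simp: maker_goal_def)
    then have "p = q" if "p \<in> Q - M" "q \<in> Q - M" for p q
      using strong_resolving_set_blowup_diametral[OF sym assms(2) diam _ _ _ _ uv(1,2)] that Q_sub
      by blast
    moreover have "finite (Q - M)" by (simp add: Q_def)
    ultimately show "card (Q - M) \<le> 1" by (metis One_nat_def card_le_Suc0_iff_eq)
  qed
qed

end
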